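(* There exist infinitely many finite groups $G$ whose prime graph $\Gamma_e(G)$ is a path with two edges (on three vertices) while the codegree graph $\Gamma(G)$ is a triangle.
   Context: For $\chi\in{\rm Irr}(G)$, ${\rm cod}(\chi)=|G:\ker\chi|/\chi(1)$. The codegree graph $\Gamma(G)$ has vertices the prime divisors of $|G|$, distinct $p,q$ adjacent iff $pq$ divides ${\rm cod}(\chi)$ for some $\chi\in{\rm Irr}(G)$. The prime graph $\Gamma_e(G)$ has the same vertices, distinct $p,q$ adjacent iff $G$ has an element of order divisible by $pq$. *)

theory Defs
  imports "HOL-Algebra.Multiplicative_Group" "Jordan_Normal_Form.Matrix" "HOL-Computational_Algebra.Primes"
begin

definition is_rep :: "('g, 'b) monoid_scheme \<Rightarrow> nat \<Rightarrow> ('g \<Rightarrow> complex mat) \<Rightarrow> bool" where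
  "is_rep G n \<rho> \<longleftrightarrow>
     (\<forall>g\<in>carrier G. \<rho> g \<in> carrier_mat n n) \<and>
     (\<forall>g\<in>carrier G. \<forall>h\<in>carrier G. \<rho> (g \<otimes>\<^bsub>G\<^esub> h) = \<rho> g * \<rho> h) \<and>
     \<rho> \<one>\<^bsub>G\<^esub> = 1\<^sub>m n"

definition inv_subspace :: "('g, 'b) monoid_scheme \<Rightarrow> nat \<Rightarrow> ('g \<Rightarrow> complex mat) \<Rightarrow> complex vec set \<Rightarrow> bool" where
  "inv_subspace G n \<rho> W \<longleftrightarrow>
     W \<subseteq> carrier_vec n \<and> 0\<^sub>v n \<in> W \<and>
     (\<forall>v\<in>W. \<forall>w\<in>W. v + w \<in> W) \<and>
     (\<forall>c::complex. \<forall>v\<in>W. c \<cdot>\<^sub>v v \<in> W) \<and>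
     (\<forall>g\<in>carrier G. \<forall>v\<in>W. \<rho> g *\<^sub>v v \<in> W)"

(* irreducible complex representation of degree n (affording an irreducible character of degree n) *)
definition irr_rep :: "('g, 'b) monoid_scheme \<Rightarrow> nat \<Rightarrow> ('g \<Rightarrow> complex mat) \<Rightarrow> bool" where
  "irr_rep G n \<rho> \<longleftrightarrow> n > 0 \<and> is_rep G n \<rho> \<and>
     (\<forall>W. inv_subspace G n \<rho> W \<longrightarrow> W = {0\<^sub>v n} \<or> W = carrier_vec n)"

(* kernel of the representation = kernel of its character *)
definition rep_ker :: "('g, 'b) monoid_scheme \<Rightarrow> nat \<Rightarrow> ('g \<Rightarrow> complex mat) \<Rightarrow> 'g set" where
  "rep_ker G n \<rho> = {g\<in>carrier G. \<rho> g = 1\<^sub>m n}"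

(* codegree |G : ker chi| / chi(1); this is always an integer for chi irreducible *)
definition rep_cod :: "('g, 'b) monoid_scheme \<Rightarrow> nat \<Rightarrow> ('g \<Rightarrow> complex mat) \<Rightarrow> nat" where
  "rep_cod G n \<rho> = card (carrier G) div (card (rep_ker G n \<rho>) * n)"

definition group_primes :: "('g, 'b) monoid_scheme \<Rightarrow> nat set" where
  "group_primes G = {p. prime p \<and> p dvd card (carrier G)}"

definition cod_adj :: "('g, 'b) monoid_scheme \<Rightarrow> nat \<Rightarrow> nat \<Rightarrow> bool" where
  "cod_adj G p q \<longleftrightarrow> p \<noteq> q \<and> p \<in> group_primes G \<and> q \<in> group_primes G \<and>
     (\<exists>n \<rho>. irr_rep G n \<rho> \<and> p * q dvd rep_cod G n \<rho>)"

definition prime_adj :: "('g, 'b) monoid_scheme \<Rightarrow> nat \<Rightarrow> nat \<Rightarrow> bool" where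
  "prime_adj G p q \<longleftrightarrow> p \<noteq> q \<and> p \<in> group_primes G \<and> q \<in> group_primes G \<and>
     (\<exists>g\<in>carrier G. p * q dvd group.ord G g)"

definition edges :: "nat set \<Rightarrow> (nat \<Rightarrow> nat \<Rightarrow> bool) \<Rightarrow> nat set set" where
  "edges V E = {{p, q} | p q. p \<in> V \<and> q \<in> V \<and> E p q}"

definition is_path3 :: "nat set \<Rightarrow> (nat \<Rightarrow> nat \<Rightarrow> bool) \<Rightarrow> bool" where
  "is_path3 V E \<longleftrightarrow> card V = 3 \<and> card (edges V E) = 2"

definition is_triangle :: "nat set \<Rightarrow> (nat \<Rightarrow> nat \<Rightarrow> bool) \<Rightarrow> bool" where
  "is_triangle V E \<longleftrightarrow> card V = 3 \<and> (\<forall>p\<in>V. \<forall>q\<in>V. p \<noteq> q \<longrightarrow> E p q)"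

end

theory Submission
  imports
    Defs
    "HOL-Algebra.Sym_Groups"
    "HOL-Algebra.Elementary_Groups"
    "HOL-Combinatorics.Cycles"
    "HOL-Library.Countable_Set"
begin

(* The groups are S5 x C_(2^k) for k >= 1, with prime divisors 2, 3 and 5.
   A 3-cycle or a 5-cycle paired with a generator of C_(2^k) has order 3 * 2^k or 5 * 2^k,
   giving the edges 2-3 and 2-5 of the prime graph. No permutation of five points has order
   divisible by 15 (its cycle lengths would add up to at least 8), and C_(2^k) is a 2-group,
   so 3 and 5 are not adjacent. The standard representation of S5 on the sum-zero hyperplane
   of C^5 is irreducible and faithful; inflated to S5 x C_(2^k) its kernel is C_(2^k), so its
   codegree is 120/4 = 30 and the codegree graph is a triangle. Both graphs are invariant
   under isomorphism, so the groups may be transported to a carrier of natural numbers. *)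

section \<open>Isomorphism invariance of the two graphs\<close>

lemma (in group) iso_ord:
  assumes H: "group H" and \<phi>: "\<phi> \<in> iso G H" and x: "x \<in> carrier G"
  shows "group.ord H (\<phi> x) = ord x"
proof -
  have inj: "inj_on \<phi> (carrier G)" using \<phi> by (simp add: iso_iff)
  have "\<phi> x [^]\<^bsub>H\<^esub> n = \<one>\<^bsub>H\<^esub> \<longleftrightarrow> x [^] n = \<one>" for n :: nat
  proof -
    have "\<phi> x [^]\<^bsub>H\<^esub> n = \<phi> (x [^] n)" "\<one>\<^bsub>H\<^esub> = \<phi> \<one>"
      using hom_nat_pow[OF iso_imp_homomorphism[OF \<phi>] x is_group H]
        hom_one[OF iso_imp_homomorphism[OF \<phi>] is_group H] by simp_all
    then show ?thesis using inj x by (simp add: inj_on_eq_iff)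
  qed
  then show ?thesis
    using x iso_imp_homomorphism[OF \<phi>]
    by (simp add: group.ord_unique[OF H] pow_eq_id hom_in_carrier)
qed

lemma iso_group_primes: "G \<cong> H \<Longrightarrow> group_primes G = group_primes H"
  by (simp add: group_primes_def iso_same_card)

lemma iso_prime_adj:
  assumes G: "group G" and H: "group H" and iso: "G \<cong> H"
  shows "prime_adj G = prime_adj H"
proof -
  obtain \<phi> where \<phi>: "\<phi> \<in> iso G H" using iso by (auto simp: is_iso_def)
  have onto: "carrier H = \<phi> ` carrier G" using \<phi> by (simp add: iso_iff)
  have "(\<exists>g\<in>carrier G. d dvd group.ord G g) \<longleftrightarrow> (\<exists>h\<in>carrier H. d dvd group.ord H h)" for d
    unfolding onto by (simp add: group.iso_ord[OF G H \<phi>])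
  then show ?thesis
    by (simp add: fun_eq_iff prime_adj_def iso_group_primes[OF iso])
qed

lemma is_rep_comp_hom:
  assumes "group G" "group H" "\<phi> \<in> hom G H" "is_rep H n \<rho>"
  shows "is_rep G n (\<rho> \<circ> \<phi>)"
proof -
  interpret group_hom G H \<phi>
    using assms by (simp add: group_hom_def group_hom_axioms_def)
  show ?thesis using assms(4) by (simp add: is_rep_def)
qed

lemma inv_subspace_comp_epi:
  assumes "\<phi> \<in> epi G H"
  shows "inv_subspace G n (\<rho> \<circ> \<phi>) W \<longleftrightarrow> inv_subspace H n \<rho> W"
proof -
  have "carrier H = \<phi> ` carrier G" using assms by (simp add: epi_def)
  then show ?thesis by (simp add: inv_subspace_def)
qed

lemma irr_rep_comp_epi:
  assumes "group G" "group H" "\<phi> \<in> epi G H" "irr_rep H n \<rho>"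
  shows "irr_rep G n (\<rho> \<circ> \<phi>)"
proof -
  have "is_rep G n (\<rho> \<circ> \<phi>)"
    using assms by (intro is_rep_comp_hom) (auto simp: irr_rep_def epi_def)
  then show ?thesis
    using assms(4) by (simp add: irr_rep_def inv_subspace_comp_epi[OF assms(3)])
qed

lemma rep_ker_comp_hom:
  "\<phi> \<in> hom G H \<Longrightarrow> rep_ker G n (\<rho> \<circ> \<phi>) = {g \<in> carrier G. \<phi> g \<in> rep_ker H n \<rho>}"
  unfolding rep_ker_def by (auto dest: hom_in_carrier)

lemma rep_cod_comp_iso:
  assumes \<phi>: "\<phi> \<in> iso G H"
  shows "rep_cod G n (\<rho> \<circ> \<phi>) = rep_cod H n \<rho>"
proof -
  have bij: "bij_betw \<phi> (carrier G) (carrier H)" using \<phi> by (simp add: iso_def)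
  have "\<phi> ` {g \<in> carrier G. \<phi> g \<in> rep_ker H n \<rho>} = rep_ker H n \<rho>"
    using bij by (force simp: bij_betw_def rep_ker_def)
  then have "bij_betw \<phi> {g \<in> carrier G. \<phi> g \<in> rep_ker H n \<rho>} (rep_ker H n \<rho>)"
    by (rule bij_betw_subset[OF bij, rotated]) auto
  then have "card (rep_ker G n (\<rho> \<circ> \<phi>)) = card (rep_ker H n \<rho>)"
    by (simp add: rep_ker_comp_hom[OF iso_imp_homomorphism[OF \<phi>]] bij_betw_same_card)
  moreover have "card (carrier G) = card (carrier H)" using bij by (rule bij_betw_same_card)
  ultimately show ?thesis by (simp add: rep_cod_def)
qed

lemma cod_adj_comp_iso:
  assumes G: "group G" and H: "group H" and \<phi>: "\<phi> \<in> iso G H" and adj: "cod_adj H p q"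
  shows "cod_adj G p q"
proof -
  obtain n \<rho> where \<rho>: "irr_rep H n \<rho>" "p * q dvd rep_cod H n \<rho>"
    using adj by (auto simp: cod_adj_def)
  have "irr_rep G n (\<rho> \<circ> \<phi>)"
    using \<phi> by (intro irr_rep_comp_epi[OF G H _ \<rho>(1)]) (simp add: iso_iff_mon_epi)
  moreover have "p * q dvd rep_cod G n (\<rho> \<circ> \<phi>)"
    using \<rho>(2) by (simp add: rep_cod_comp_iso[OF \<phi>])
  ultimately show ?thesis
    using adj by (auto simp: cod_adj_def iso_group_primes[OF is_isoI[OF \<phi>]])
qed

lemma iso_cod_adj:
  assumes G: "group G" and H: "group H" and iso: "G \<cong> H"
  shows "cod_adj G = cod_adj H"
proof -
  obtain \<phi> where \<phi>: "\<phi> \<in> iso G H" using iso by (auto simp: is_iso_def)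
  have \<psi>: "inv_into (carrier G) \<phi> \<in> iso H G" using group.iso_set_sym[OF G \<phi>] .
  show ?thesis
    using cod_adj_comp_iso[OF G H \<phi>] cod_adj_comp_iso[OF H G \<psi>] by blast
qed

definition image_monoid :: "('a \<Rightarrow> 'c) \<Rightarrow> ('a, 'b) monoid_scheme \<Rightarrow> 'c monoid" where
  "image_monoid f H =
     \<lparr>carrier = f ` carrier H,
      monoid.mult = (\<lambda>x y. f (inv_into (carrier H) f x \<otimes>\<^bsub>H\<^esub> inv_into (carrier H) f y)),
      one = f \<one>\<^bsub>H\<^esub>\<rparr>"

lemma image_monoid_iso:
  assumes H: "group H" and inj: "inj_on f (carrier H)"
  shows "group (image_monoid f H)" and "f \<in> iso H (image_monoid f H)"
proof -
  interpret group H by (rule H)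
  let ?G = "image_monoid f H"
  have carrier: "carrier ?G = f ` carrier H" and one: "\<one>\<^bsub>?G\<^esub> = f \<one>\<^bsub>H\<^esub>"
    by (simp_all add: image_monoid_def)
  have mult: "f x \<otimes>\<^bsub>?G\<^esub> f y = f (x \<otimes>\<^bsub>H\<^esub> y)" if "x \<in> carrier H" "y \<in> carrier H" for x y
    using that inj by (simp add: image_monoid_def)
  show "group ?G"
  proof (rule groupI)
    fix x assume "x \<in> carrier ?G"
    then obtain a where a: "a \<in> carrier H" "x = f a" by (auto simp: carrier)
    show "\<exists>y\<in>carrier ?G. y \<otimes>\<^bsub>?G\<^esub> x = \<one>\<^bsub>?G\<^esub>"
      using a by (intro bexI[of _ "f (inv\<^bsub>H\<^esub> a)"]) (simp_all add: carrier mult one)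
  qed (auto simp: carrier mult one m_assoc)
  show "f \<in> iso H ?G"
    using inj by (auto simp: iso_def hom_def bij_betw_def carrier mult)
qed

lemma countable_group_iso_nat_monoid:
  assumes H: "group H" and "countable (carrier H)"
  obtains G :: "nat monoid" where "group G" "G \<cong> H"
proof -
  obtain f :: "_ \<Rightarrow> nat" where f: "inj_on f (carrier H)"
    using assms(2) by (auto simp: countable_def)
  have "H \<cong> image_monoid f H" using image_monoid_iso(2)[OF H f] by (rule is_isoI)
  then show ?thesis using that image_monoid_iso(1)[OF H f] group.iso_sym[OF H] by blast
qed

section \<open>Element orders\<close>

lemma pow_DirProd: "(x, y) [^]\<^bsub>G \<times>\<times> H\<^esub> (n::nat) = (x [^]\<^bsub>G\<^esub> n, y [^]\<^bsub>H\<^esub> n)"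
  by (induction n) auto

lemma ord_DirProd:
  assumes G: "group G" and H: "group H" and "x \<in> carrier G" "y \<in> carrier H"
  shows "group.ord (G \<times>\<times> H) (x, y) = lcm (group.ord G x) (group.ord H y)"
proof -
  have "(x, y) [^]\<^bsub>G \<times>\<times> H\<^esub> n = \<one>\<^bsub>G \<times>\<times> H\<^esub> \<longleftrightarrow> lcm (group.ord G x) (group.ord H y) dvd n"
    for n :: nat
    using assms by (simp add: pow_DirProd group.pow_eq_id)
  then show ?thesis
    using assms by (simp add: group.ord_unique[OF DirProd_group[OF G H]])
qed

lemma fst_epi_DirProd:
  assumes "group H"
  shows "fst \<in> epi (G \<times>\<times> H) G"
proof -
  have "fst \<in> hom (G \<times>\<times> H) G"
    using hom_of_fst[OF assms, of "\<lambda>x. x" G G] iso_imp_homomorphism[OF iso_set_refl]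
    by (simp add: comp_def)
  moreover have "carrier H \<noteq> {}" using assms by (auto simp: group_def monoid.carrier_not_empty)
  ultimately show ?thesis by (simp add: epi_def)
qed

lemma ord_integer_mod_group_1:
  assumes "1 < n"
  shows "group.ord (integer_mod_group n) 1 = n"
proof -
  have "1 [^]\<^bsub>integer_mod_group n\<^esub> m = \<one>\<^bsub>integer_mod_group n\<^esub> \<longleftrightarrow> n dvd m" for m :: nat
    using assms by (simp add: zmod_int[symmetric] flip: of_nat_mod) (simp add: dvd_eq_mod_eq_0)
  then show ?thesis
    using assms by (simp add: group.ord_unique[OF group_integer_mod_group])
qed

lemma card_integer_mod_group: "0 < n \<Longrightarrow> card (carrier (integer_mod_group n)) = n"
  by (simp add: carrier_integer_mod_group)

lemma pow_sym_group: "\<sigma> [^]\<^bsub>sym_group n\<^esub> (k::nat) = \<sigma> ^^ k"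
  by (induction k) (auto simp: sym_group_def funpow_Suc_right simp del: funpow.simps)

lemma least_power_le_card:
  assumes \<sigma>: "\<sigma> permutes S" and S: "finite S" "x \<in> S"
  shows "least_power \<sigma> x \<le> card S"
proof -
  have "set (support \<sigma> x) \<subseteq> S"
    using permutes_in_image[OF permutes_funpow[OF \<sigma>]] S(2) by auto
  moreover have "distinct (support \<sigma> x)"
    using \<sigma> S(1) by (intro cycle_of_permutation) (auto simp: permutation_permutes)
  ultimately have "card (set (support \<sigma> x)) \<le> card S" "card (set (support \<sigma> x)) = least_power \<sigma> x"
    using card_mono[OF S(1)] distinct_card by fastforce+
  then show ?thesis by simp
qed

lemma least_power_eq_card_imp_funpow_id:
  assumes \<sigma>: "\<sigma> permutes S" and S: "finite S" "x \<in> S" and full: "least_power \<sigma> x = card S"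
  shows "\<sigma> ^^ card S = id"
proof
  fix y
  have perm: "permutation \<sigma>" using \<sigma> S(1) by (auto simp: permutation_permutes)
  have "set (support \<sigma> x) \<subseteq> S"
    using permutes_in_image[OF permutes_funpow[OF \<sigma>]] S(2) by auto
  moreover have "card (set (support \<sigma> x)) = card S"
    using distinct_card[OF cycle_of_permutation[OF perm, of x]] by (simp add: full)
  ultimately have orbit: "set (support \<sigma> x) = S" by (rule card_subset_eq[OF S(1)])
  show "(\<sigma> ^^ card S) y = id y"
  proof (cases "y \<in> S")
    case True
    then obtain i where y: "y = (\<sigma> ^^ i) x" using orbit by auto
    have "(\<sigma> ^^ card S) y = (\<sigma> ^^ i) ((\<sigma> ^^ card S) x)"
      unfolding y by (metis add.commute comp_apply funpow_add)
    also have "\<dots> = y" using least_power_of_permutation(1)[OF perm, of x] by (simp add: full y)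
    finally show ?thesis by simp
  next
    case False
    then show ?thesis using permutes_not_in[OF permutes_funpow[OF \<sigma>]] by simp
  qed
qed

lemma permutes_5_funpow_12_or_5:
  assumes \<sigma>: "\<sigma> permutes {1..5::nat}"
  shows "\<sigma> ^^ 12 = id \<or> \<sigma> ^^ 5 = id"
proof (cases "\<exists>x\<in>{1..5}. least_power \<sigma> x = 5")
  case True
  then show ?thesis using least_power_eq_card_imp_funpow_id[OF \<sigma>] by auto
next
  case False
  have perm: "permutation \<sigma>" using \<sigma> by (auto simp: permutation_permutes)
  have "(\<sigma> ^^ 12) x = x" for x
  proof (cases "x \<in> {1..5}")
    case True
    have "least_power \<sigma> x \<le> 5" "least_power \<sigma> x \<noteq> 5" "0 < least_power \<sigma> x"
      using False least_power_le_card[OF \<sigma> finite_atLeastAtMost True]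
        least_power_of_permutation(2)[OF perm] True by auto
    then have "least_power \<sigma> x = 1 \<or> least_power \<sigma> x = 2 \<or> least_power \<sigma> x = 3 \<or> least_power \<sigma> x = 4"
      by presburger
    then have "least_power \<sigma> x dvd 12" by auto
    then show ?thesis using least_power_dvd[OF perm] by blast
  next
    case False
    then show ?thesis using permutes_not_in[OF permutes_funpow[OF \<sigma>]] by simp
  qed
  then show ?thesis by auto
qed

lemma sym_group_5_ord_dvd:
  assumes "\<sigma> \<in> carrier (sym_group 5)"
  shows "group.ord (sym_group 5) \<sigma> dvd 12 \<or> group.ord (sym_group 5) \<sigma> dvd 5"
proof -
  have "\<sigma> ^^ 12 = id \<or> \<sigma> ^^ 5 = id"
    using assms permutes_5_funpow_12_or_5 by (simp add: sym_group_carrier)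
  moreover have "\<sigma> ^^ n = id \<longleftrightarrow> group.ord (sym_group 5) \<sigma> dvd n" for n
    using group.pow_eq_id[OF sym_group_is_group assms] by (simp add: pow_sym_group sym_group_one)
  ultimately show ?thesis by simp
qed

lemma funpow_length_cycle_of_list:
  assumes "cycle cs"
  shows "cycle_of_list cs ^^ length cs = id"
proof
  fix x
  show "(cycle_of_list cs ^^ length cs) x = id x"
  proof (cases "x \<in> set cs")
    case True
    have "map (cycle_of_list cs ^^ length cs) cs = map id cs"
      using cyclic_rotation[OF assms] by simp
    then show ?thesis using True by (simp only: map_eq_conv)
  next
    case False
    then show ?thesis using permutes_not_in[OF permutes_funpow[OF cycle_permutes]] by simp
  qed
qed

lemma cycle_of_list_neq_id:
  assumes "cycle cs" "2 \<le> length cs"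
  shows "cycle_of_list cs \<noteq> id"
proof -
  obtain i j rest where cs: "cs = i # j # rest"
    using assms(2) by (auto simp: numeral_2_eq_2 Suc_le_length_iff)
  have "cycle_of_list cs i = j" using assms(1) by (simp add: cs id_outside_supp)
  moreover have "i \<noteq> j" using assms(1) by (simp add: cs)
  ultimately show ?thesis by auto
qed

lemma (in group) ord_eq_prime:
  assumes "x \<in> carrier G" "x \<noteq> \<one>" "x [^] p = \<one>" "prime p"
  shows "ord x = p"
proof -
  have "ord x dvd p" using assms(1,3) pow_eq_id by blast
  moreover have "ord x \<noteq> 1" using assms(1,2) ord_eq_1 by blast
  ultimately show ?thesis using assms(4) prime_nat_iff by blast
qed

lemma ord_cycle_of_list:
  assumes "cycle cs" "set cs \<subseteq> {1..n}" "prime (length cs)"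
  shows "group.ord (sym_group n) (cycle_of_list cs) = length cs"
proof (rule group.ord_eq_prime[OF sym_group_is_group])
  show "cycle_of_list cs \<in> carrier (sym_group n)"
    using permutes_subset[OF cycle_permutes assms(2)] by (simp add: sym_group_carrier)
  show "cycle_of_list cs \<noteq> \<one>\<^bsub>sym_group n\<^esub>"
    using cycle_of_list_neq_id[OF assms(1)] prime_ge_2_nat[OF assms(3)] by (simp add: sym_group_one)
  show "cycle_of_list cs [^]\<^bsub>sym_group n\<^esub> length cs = \<one>\<^bsub>sym_group n\<^esub>"
    using funpow_length_cycle_of_list[OF assms(1)] by (simp add: pow_sym_group sym_group_one)
qed (rule assms(3))

section \<open>The standard representation of the symmetric group\<close>

(* S_(m+1) acts on the sum-zero hyperplane of C^(m+1), written in the basis e_i - e_(m+1),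
   i = 1..m, of coordinate vectors in C^m. Then std_vec m p is the coordinate vector of
   e_p - e_(m+1) (zero for p = m+1), the i-th column of std_rep m s is the image of
   e_(i+1) - e_(m+1), and hyperplane_coord m v p (for 1 <= p <= m+1) is the p-th entry in
   C^(m+1) of the hyperplane vector with coordinate vector v. *)
definition std_vec :: "nat \<Rightarrow> nat \<Rightarrow> complex vec" where
  "std_vec m p = vec m (\<lambda>j. if p = Suc j then 1 else 0)"

definition std_rep :: "nat \<Rightarrow> (nat \<Rightarrow> nat) \<Rightarrow> complex mat" where
  "std_rep m \<sigma> = mat m m (\<lambda>(j, i). std_vec m (\<sigma> (Suc i)) $ j - std_vec m (\<sigma> (Suc m)) $ j)"

definition hyperplane_coord :: "nat \<Rightarrow> complex vec \<Rightarrow> nat \<Rightarrow> complex" where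
  "hyperplane_coord m v p = (if p \<le> m then v $ (p - 1) else - (\<Sum>j<m. v $ j))"

lemma std_vec_carrier [simp]: "std_vec m p \<in> carrier_vec m"
  and dim_std_vec [simp]: "dim_vec (std_vec m p) = m"
  and index_std_vec [simp]: "j < m \<Longrightarrow> std_vec m p $ j = (if p = Suc j then 1 else 0)"
  by (simp_all add: std_vec_def)

lemma std_vec_last: "std_vec m (Suc m) = 0\<^sub>v m"
  by (rule eq_vecI) simp_all

lemma std_vec_unit_vec: "p \<in> {1..m} \<Longrightarrow> std_vec m p = unit_vec m (p - 1)"
  by (rule eq_vecI) auto

lemma std_rep_carrier [simp]: "std_rep m \<sigma> \<in> carrier_mat m m"
  and dim_row_std_rep [simp]: "dim_row (std_rep m \<sigma>) = m"
  and dim_col_std_rep [simp]: "dim_col (std_rep m \<sigma>) = m"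
  by (simp_all add: std_rep_def)

lemma col_std_rep: "i < m \<Longrightarrow> col (std_rep m \<sigma>) i = std_vec m (\<sigma> (Suc i)) - std_vec m (\<sigma> (Suc m))"
  by (rule eq_vecI) (simp_all add: std_rep_def)

lemma std_rep_mult_std_vec:
  assumes "p \<in> {1..Suc m}"
  shows "std_rep m \<sigma> *\<^sub>v std_vec m p = std_vec m (\<sigma> p) - std_vec m (\<sigma> (Suc m))"
proof (cases "p = Suc m")
  case True
  then show ?thesis by (intro eq_vecI) (simp_all add: std_vec_last)
next
  case False
  then have p: "p \<in> {1..m}" using assms by auto
  then show ?thesis
    by (intro eq_vecI) (auto simp: std_vec_unit_vec std_rep_def)
qed

lemma std_rep_mult:
  assumes "\<tau> ` {1..Suc m} \<subseteq> {1..Suc m}"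
  shows "std_rep m (\<sigma> \<circ> \<tau>) = std_rep m \<sigma> * std_rep m \<tau>"
proof (rule mat_col_eqI)
  fix i assume "i < dim_col (std_rep m \<sigma> * std_rep m \<tau>)"
  then have i: "i < m" by simp
  have \<tau>: "\<tau> (Suc i) \<in> {1..Suc m}" "\<tau> (Suc m) \<in> {1..Suc m}"
    using assms i by (simp_all add: image_subset_iff)
  have "col (std_rep m \<sigma> * std_rep m \<tau>) i
      = std_rep m \<sigma> *\<^sub>v (std_vec m (\<tau> (Suc i)) - std_vec m (\<tau> (Suc m)))"
    using i by (simp add: col_mult2[of _ m m _ m] col_std_rep)
  also have "\<dots> = std_rep m \<sigma> *\<^sub>v std_vec m (\<tau> (Suc i)) - std_rep m \<sigma> *\<^sub>v std_vec m (\<tau> (Suc m))"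
    by (rule mult_minus_distrib_mat_vec[of _ m m]) simp_all
  also have "\<dots> = col (std_rep m (\<sigma> \<circ> \<tau>)) i"
    using i \<tau> by (simp add: std_rep_mult_std_vec col_std_rep) (rule eq_vecI; simp)
  finally show "col (std_rep m (\<sigma> \<circ> \<tau>)) i = col (std_rep m \<sigma> * std_rep m \<tau>) i" by simp
qed simp_all

lemma std_rep_id: "std_rep m id = 1\<^sub>m m"
  by (rule eq_matI) (auto simp: std_rep_def)

lemma is_rep_std_rep: "is_rep (sym_group (Suc m)) m (std_rep m)"
  unfolding is_rep_def
proof (intro conjI ballI)
  fix \<sigma> \<tau> assume "\<tau> \<in> carrier (sym_group (Suc m))"
  then have "\<tau> ` {1..Suc m} \<subseteq> {1..Suc m}"
    by (simp add: sym_group_carrier permutes_image)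
  then show "std_rep m (\<sigma> \<otimes>\<^bsub>sym_group (Suc m)\<^esub> \<tau>) = std_rep m \<sigma> * std_rep m \<tau>"
    by (simp add: sym_group_mult std_rep_mult)
qed (simp_all add: sym_group_one std_rep_id)

lemma std_rep_mult_vec_index:
  assumes \<sigma>: "\<sigma> permutes {1..Suc m}" and v: "v \<in> carrier_vec m" and j: "j < m"
    and q: "\<sigma> q = Suc j"
  shows "(std_rep m \<sigma> *\<^sub>v v) $ j = hyperplane_coord m v q"
proof -
  have q_range: "q \<in> {1..Suc m}"
  proof (rule ccontr)
    assume "q \<notin> {1..Suc m}"
    then have "\<sigma> q = q" using permutes_not_in[OF \<sigma>] by blast
    with \<open>q \<notin> _\<close> q j show False by simp
  qed
  have preimage: "\<sigma> p = Suc j \<longleftrightarrow> p = q" for p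
    using q permutes_inj[OF \<sigma>] by (metis injD)
  have "(std_rep m \<sigma> *\<^sub>v v) $ j
      = (\<Sum>i<m. ((if Suc i = q then 1 else 0) - (if Suc m = q then 1 else 0)) * v $ i)"
    using j v by (simp add: scalar_prod_def std_rep_def preimage atLeast0LessThan)
  also have "\<dots> = hyperplane_coord m v q"
  proof (cases "q = Suc m")
    case True
    then show ?thesis by (simp add: hyperplane_coord_def sum_negf)
  next
    case False
    then have "q - 1 < m" "Suc i = q \<longleftrightarrow> i = q - 1" for i using q_range by auto
    then have "(\<Sum>i<m. ((if Suc i = q then 1 else 0) - (if Suc m = q then 1 else 0)) * v $ i)
             = (\<Sum>i<m. if i = q - 1 then v $ i else 0)"
      using False by (intro sum.cong) auto
    then show ?thesis using \<open>q - 1 < m\<close> False q_range by (simp add: hyperplane_coord_def)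
  qed
  finally show ?thesis .
qed

lemma hyperplane_coord_nonconstant:
  assumes v: "v \<in> carrier_vec m" "v \<noteq> 0\<^sub>v m"
  shows "\<exists>a\<in>{1..m}. hyperplane_coord m v a \<noteq> hyperplane_coord m v (Suc m)"
proof (rule ccontr)
  assume const: "\<not> ?thesis"
  define c where "c = hyperplane_coord m v (Suc m)"
  have same: "v $ j = c" if "j < m" for j
  proof -
    have "hyperplane_coord m v (Suc j) = c" using const that by (auto simp: c_def)
    then show ?thesis using that by (simp add: hyperplane_coord_def)
  qed
  have "c = - (\<Sum>j<m. v $ j)" by (simp add: c_def hyperplane_coord_def)
  also have "(\<Sum>j<m. v $ j) = of_nat m * c" using same by simp
  finally have "c + of_nat m * c = 0" by (simp only: eq_neg_iff_add_eq_0)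
  then have "of_nat (Suc m) * c = 0" by (simp add: algebra_simps)
  then have "c = 0" using of_nat_neq_0[of m, where 'a=complex] by (simp del: of_nat_Suc)
  then have "v = 0\<^sub>v m" using v(1) same by (intro eq_vecI) auto
  with v(2) show False ..
qed

lemma std_rep_transpose_diff:
  assumes a: "a \<in> {1..m}" and v: "v \<in> carrier_vec m"
  shows "v - std_rep m (Transposition.transpose a (Suc m)) *\<^sub>v v
       = (hyperplane_coord m v a - hyperplane_coord m v (Suc m)) \<cdot>\<^sub>v std_vec m a"
proof (rule eq_vecI)
  let ?t = "Transposition.transpose a (Suc m)"
  have t: "?t permutes {1..Suc m}" using a by (intro permutes_swap_id) auto
  fix j assume "j < dim_vec ((hyperplane_coord m v a - hyperplane_coord m v (Suc m)) \<cdot>\<^sub>v std_vec m a)"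
  then have j: "j < m" by simp
  have "(std_rep m ?t *\<^sub>v v) $ j = hyperplane_coord m v (?t (Suc j))"
    using j by (intro std_rep_mult_vec_index[OF t v]) simp_all
  then show "(v - std_rep m ?t *\<^sub>v v) $ j
      = ((hyperplane_coord m v a - hyperplane_coord m v (Suc m)) \<cdot>\<^sub>v std_vec m a) $ j"
    using a j v by (auto simp: hyperplane_coord_def transpose_def)
qed (use v in simp)

lemma std_rep_transpose_std_vec:
  assumes "a \<in> {1..m}" "c \<in> {1..m}"
  shows "std_rep m (Transposition.transpose a c) *\<^sub>v std_vec m a = std_vec m c"
  using assms by (simp add: std_rep_mult_std_vec std_vec_last)

lemma subspace_std_vecs_eq_carrier:
  assumes W: "W \<subseteq> carrier_vec m" "0\<^sub>v m \<in> W"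
    and add: "\<And>v w. v \<in> W \<Longrightarrow> w \<in> W \<Longrightarrow> v + w \<in> W"
    and smult: "\<And>c v. v \<in> W \<Longrightarrow> c \<cdot>\<^sub>v v \<in> W"
    and basis: "\<And>p. p \<in> {1..m} \<Longrightarrow> std_vec m p \<in> W"
  shows "W = carrier_vec m"
proof
  show "carrier_vec m \<subseteq> W"
  proof
    fix w :: "complex vec" assume w: "w \<in> carrier_vec m"
    have "vec m (\<lambda>j. if j < t then w $ j else 0) \<in> W" if "t \<le> m" for t
      using that
    proof (induction t)
      case 0
      then show ?case using W(2) by (simp add: zero_vec_def)
    next
      case (Suc t)
      have "vec m (\<lambda>j. if j < Suc t then w $ j else 0)
          = vec m (\<lambda>j. if j < t then w $ j else 0) + w $ t \<cdot>\<^sub>v std_vec m (Suc t)"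
        by (rule eq_vecI) (auto simp: less_Suc_eq)
      then show ?case using Suc add smult basis by simp
    qed
    moreover have "vec m (\<lambda>j. if j < m then w $ j else 0) = w"
      using w by (intro eq_vecI) auto
    ultimately show "w \<in> W" by (metis order_refl)
  qed
qed (use W in blast)

lemma irr_rep_std_rep:
  assumes "0 < m"
  shows "irr_rep (sym_group (Suc m)) m (std_rep m)"
  unfolding irr_rep_def
proof (intro conjI allI impI assms is_rep_std_rep)
  fix W assume inv: "inv_subspace (sym_group (Suc m)) m (std_rep m) W"
  then have W: "W \<subseteq> carrier_vec m" "0\<^sub>v m \<in> W"
    and add: "\<And>v w. v \<in> W \<Longrightarrow> w \<in> W \<Longrightarrow> v + w \<in> W"
    and smult: "\<And>c v. v \<in> W \<Longrightarrow> c \<cdot>\<^sub>v v \<in> W"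
    and act: "\<And>\<sigma> v. \<sigma> permutes {1..Suc m} \<Longrightarrow> v \<in> W \<Longrightarrow> std_rep m \<sigma> *\<^sub>v v \<in> W"
    by (auto simp: inv_subspace_def sym_group_carrier)
  show "W = {0\<^sub>v m} \<or> W = carrier_vec m"
  proof (cases "W \<subseteq> {0\<^sub>v m}")
    case True
    then show ?thesis using W(2) by blast
  next
    case False
    then obtain v where v: "v \<in> W" "v \<noteq> 0\<^sub>v m" by blast
    have v_carrier: "v \<in> carrier_vec m" using v(1) W(1) by blast
    obtain a where a: "a \<in> {1..m}" and
      d: "hyperplane_coord m v a - hyperplane_coord m v (Suc m) \<noteq> 0"
      using hyperplane_coord_nonconstant[OF v_carrier v(2)] by auto
    let ?d = "hyperplane_coord m v a - hyperplane_coord m v (Suc m)"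
    let ?t = "Transposition.transpose a (Suc m)"
    have "v + (-1) \<cdot>\<^sub>v (std_rep m ?t *\<^sub>v v) \<in> W"
      using a v(1) by (intro add smult act permutes_swap_id) auto
    moreover have "v + (-1) \<cdot>\<^sub>v (std_rep m ?t *\<^sub>v v) = ?d \<cdot>\<^sub>v std_vec m a"
      unfolding std_rep_transpose_diff[OF a v_carrier, symmetric]
      using v_carrier by (intro eq_vecI) simp_all
    ultimately have "(1 / ?d) \<cdot>\<^sub>v (?d \<cdot>\<^sub>v std_vec m a) \<in> W" using smult by metis
    then have std_a: "std_vec m a \<in> W" using d by (simp add: smult_smult_assoc)
    have "std_vec m c \<in> W" if "c \<in> {1..m}" for c
      using act[OF _ std_a, of "Transposition.transpose a c"] a that
      by (simp add: std_rep_transpose_std_vec permutes_swap_id)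
    then show ?thesis using subspace_std_vecs_eq_carrier[OF W add smult] by blast
  qed
qed

lemma rep_ker_std_rep: "rep_ker (sym_group (Suc m)) m (std_rep m) = {id}"
proof
  show "{id} \<subseteq> rep_ker (sym_group (Suc m)) m (std_rep m)"
    by (simp add: rep_ker_def sym_group_carrier permutes_id std_rep_id)
  show "rep_ker (sym_group (Suc m)) m (std_rep m) \<subseteq> {id}"
  proof
    fix \<sigma> assume "\<sigma> \<in> rep_ker (sym_group (Suc m)) m (std_rep m)"
    then have \<sigma>: "\<sigma> permutes {1..Suc m}" and one: "std_rep m \<sigma> = 1\<^sub>m m"
      by (auto simp: rep_ker_def sym_group_carrier)
    have moved: "std_vec m (\<sigma> c) - std_vec m (\<sigma> (Suc m)) = std_vec m c" if "c \<in> {1..m}" for c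
      using std_rep_mult_std_vec[of c m \<sigma>] that one by simp
    have last: "\<sigma> (Suc m) = Suc m"
    proof (rule ccontr)
      assume "\<sigma> (Suc m) \<noteq> Suc m"
      then have d: "\<sigma> (Suc m) \<in> {1..m}" using permutes_in_image[OF \<sigma>, of "Suc m"] by auto
      have "(std_vec m (\<sigma> (\<sigma> (Suc m))) - std_vec m (\<sigma> (Suc m))) $ (\<sigma> (Suc m) - 1)
          = std_vec m (\<sigma> (Suc m)) $ (\<sigma> (Suc m) - 1)"
        using moved[OF d] by simp
      then show False using d by (auto split: if_splits)
    qed
    have fixed: "\<sigma> c = c" if "c \<in> {1..m}" for c
    proof -
      have "std_vec m (\<sigma> c) $ (c - 1) = std_vec m c $ (c - 1)"
        using moved[OF that] by (simp add: last std_vec_last)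
      then show ?thesis using that by (auto split: if_splits)
    qed
    have "\<sigma> x = x" for x
    proof -
      consider "x \<in> {1..m}" | "x = Suc m" | "x \<notin> {1..Suc m}" by fastforce
      then show ?thesis using fixed last permutes_not_in[OF \<sigma>] by cases auto
    qed
    then show "\<sigma> \<in> {id}" by auto
  qed
qed

lemma rep_cod_std_rep_fst:
  assumes H: "group H" "finite (carrier H)"
  shows "rep_cod (sym_group (Suc m) \<times>\<times> H) m (std_rep m \<circ> fst) = fact (Suc m) div m"
proof -
  have "fst \<in> hom (sym_group (Suc m) \<times>\<times> H) (sym_group (Suc m))"
    using fst_epi_DirProd[OF H(1), of "sym_group (Suc m)"] by (simp add: epi_def)
  then have "rep_ker (sym_group (Suc m) \<times>\<times> H) m (std_rep m \<circ> fst) = {id} \<times> carrier H"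
    by (auto simp: rep_ker_comp_hom rep_ker_std_rep sym_group_carrier permutes_id)
  moreover have "card (carrier H) > 0"
    using H by (auto simp: card_gt_0_iff group_def monoid.carrier_not_empty)
  ultimately show ?thesis
    by (simp add: rep_cod_def card_cartesian_product sym_group_card_carrier mult.commute)
qed

section \<open>The groups S5 x C_(2^k)\<close>

definition sym5_cyclic :: "nat \<Rightarrow> ((nat \<Rightarrow> nat) \<times> int) monoid" where
  "sym5_cyclic k = sym_group 5 \<times>\<times> integer_mod_group (2 ^ k)"

lemma group_sym5_cyclic: "group (sym5_cyclic k)"
  by (simp add: sym5_cyclic_def DirProd_group sym_group_is_group)

lemma card_sym5_cyclic: "card (carrier (sym5_cyclic k)) = 120 * 2 ^ k"
  by (simp add: sym5_cyclic_def card_cartesian_product sym_group_card_carrier card_integer_mod_group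
      fact_numeral)

lemma finite_sym5_cyclic: "finite (carrier (sym5_cyclic k))"
  using card_sym5_cyclic[of k] by (intro card_ge_0_finite) simp

lemma group_primes_sym5_cyclic: "group_primes (sym5_cyclic k) = {2, 3, 5}"
proof -
  have "p dvd 120 * 2 ^ k \<longleftrightarrow> p \<in> {2, 3, 5}" if p: "prime p" for p :: nat
  proof -
    have "(120 :: nat) * 2 ^ k = 2 ^ (k + 3) * 3 * 5" by (simp add: power_add)
    then have "p dvd 120 * 2 ^ k \<longleftrightarrow> (p dvd 2 ^ (k + 3) \<or> p dvd 3) \<or> p dvd 5"
      by (simp only: prime_dvd_mult_iff[OF p])
    also have "\<dots> \<longleftrightarrow> p dvd 2 \<or> p dvd 3 \<or> p dvd 5"
      using prime_dvd_power_iff[OF p, of "k + 3"] by auto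
    also have "\<dots> \<longleftrightarrow> p \<in> {2, 3, 5}"
      using primes_dvd_imp_eq[OF p, of 2] primes_dvd_imp_eq[OF p, of 3] primes_dvd_imp_eq[OF p, of 5]
      by auto
    finally show ?thesis .
  qed
  then show ?thesis by (auto simp: group_primes_def card_sym5_cyclic)
qed

lemma not_15_dvd_ord_sym5_cyclic:
  assumes g: "g \<in> carrier (sym5_cyclic k)"
  shows "\<not> 15 dvd group.ord (sym5_cyclic k) g"
proof
  obtain \<sigma> b where gs: "g = (\<sigma>, b)" by (cases g)
  have \<sigma>: "\<sigma> \<in> carrier (sym_group 5)" and b: "b \<in> carrier (integer_mod_group (2 ^ k))"
    using g by (simp_all add: gs sym5_cyclic_def)
  have "group.ord (integer_mod_group (2 ^ k)) b dvd 2 ^ k"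
    using group.ord_dvd_group_order[OF group_integer_mod_group b]
    by (simp add: order_def card_integer_mod_group)
  then have "group.ord (sym5_cyclic k) g dvd group.ord (sym_group 5) \<sigma> * 2 ^ k"
    by (simp add: gs sym5_cyclic_def ord_DirProd[OF sym_group_is_group group_integer_mod_group \<sigma> b])
  moreover assume "15 dvd group.ord (sym5_cyclic k) g"
  ultimately have "15 dvd group.ord (sym_group 5) \<sigma> * 2 ^ k" by (rule dvd_trans[rotated])
  moreover have "coprime (15 :: nat) (2 ^ k)" by simp
  ultimately have "15 dvd group.ord (sym_group 5) \<sigma>" by (simp add: coprime_dvd_mult_left_iff)
  then have "15 dvd (12 :: nat) \<or> 15 dvd (5 :: nat)"
    using sym_group_5_ord_dvd[OF \<sigma>] dvd_trans by blast
  then show False by simp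
qed

lemma dvd_ord_sym5_cyclic_cycle:
  assumes cs: "cycle cs" "set cs \<subseteq> {1..5}" "length cs = p" and p: "prime p" "odd p"
    and k: "0 < k"
  shows "2 * p dvd group.ord (sym5_cyclic k) (cycle_of_list cs, 1)"
proof -
  have c: "cycle_of_list cs \<in> carrier (sym_group 5)"
    using permutes_subset[OF cycle_permutes cs(2)] by (simp add: sym_group_carrier)
  have one: "1 \<in> carrier (integer_mod_group (2 ^ k))" using k by simp
  have "1 < (2 :: nat) ^ k" using k by (intro one_less_power) auto
  then have "group.ord (sym5_cyclic k) (cycle_of_list cs, 1) = lcm p (2 ^ k)"
    using ord_cycle_of_list[OF cs(1,2)] cs(3) p(1)
    by (simp add: sym5_cyclic_def ord_DirProd[OF sym_group_is_group group_integer_mod_group c one]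
        ord_integer_mod_group_1)
  also have "\<dots> = p * 2 ^ k"
    using p(2) by (simp add: lcm_coprime)
  finally show ?thesis using k by (simp add: dvd_power)
qed

lemma prime_adj_sym5_cyclic:
  assumes k: "0 < k"
  shows "prime_adj (sym5_cyclic k) p q \<longleftrightarrow> {p, q} = {2, 3} \<or> {p, q} = {2, 5}"
proof
  assume adj: "prime_adj (sym5_cyclic k) p q"
  then obtain g where "g \<in> carrier (sym5_cyclic k)" "p * q dvd group.ord (sym5_cyclic k) g"
    by (auto simp: prime_adj_def)
  then have "p * q \<noteq> 15" using not_15_dvd_ord_sym5_cyclic by metis
  then show "{p, q} = {2, 3} \<or> {p, q} = {2, 5}"
    using adj by (auto simp: prime_adj_def group_primes_sym5_cyclic)
next
  have carrier: "(cycle_of_list cs, 1) \<in> carrier (sym5_cyclic k)" if "set cs \<subseteq> {1..5}" for cs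
    using k permutes_subset[OF cycle_permutes that] by (simp add: sym5_cyclic_def sym_group_carrier)
  have "2 * 3 dvd group.ord (sym5_cyclic k) (cycle_of_list [1, 2, 3], 1)"
    using k by (intro dvd_ord_sym5_cyclic_cycle) simp_all
  then have "\<exists>g\<in>carrier (sym5_cyclic k). 2 * 3 dvd group.ord (sym5_cyclic k) g"
    using carrier[of "[1, 2, 3]"] by auto
  moreover have "2 * 5 dvd group.ord (sym5_cyclic k) (cycle_of_list [1, 2, 3, 4, 5], 1)"
    using k by (intro dvd_ord_sym5_cyclic_cycle) simp_all
  then have "\<exists>g\<in>carrier (sym5_cyclic k). 2 * 5 dvd group.ord (sym5_cyclic k) g"
    using carrier[of "[1, 2, 3, 4, 5]"] by auto
  moreover assume "{p, q} = {2, 3} \<or> {p, q} = {2, 5}"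
  ultimately show "prime_adj (sym5_cyclic k) p q"
    by (auto simp: prime_adj_def group_primes_sym5_cyclic doubleton_eq_iff)
qed

lemma cod_adj_sym5_cyclic:
  assumes "p \<in> {2, 3, 5}" "q \<in> {2, 3, 5}" "p \<noteq> q"
  shows "cod_adj (sym5_cyclic k) p q"
proof -
  have "irr_rep (sym_group 5) 4 (std_rep 4)" using irr_rep_std_rep[of 4] by simp
  then have "irr_rep (sym5_cyclic k) 4 (std_rep 4 \<circ> fst)"
    unfolding sym5_cyclic_def
    by (rule irr_rep_comp_epi[OF DirProd_group[OF sym_group_is_group group_integer_mod_group]
          sym_group_is_group fst_epi_DirProd[OF group_integer_mod_group]])
  moreover have "rep_cod (sym5_cyclic k) 4 (std_rep 4 \<circ> fst) = 30"
    using rep_cod_std_rep_fst[OF group_integer_mod_group, of "2 ^ k" 4]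
    by (simp add: sym5_cyclic_def fact_numeral carrier_integer_mod_group)
  moreover have "p * q dvd 30" using assms by auto
  ultimately show ?thesis
    using assms unfolding cod_adj_def group_primes_sym5_cyclic by metis
qed

lemma is_path3_sym5_cyclic:
  assumes "0 < k"
  shows "is_path3 (group_primes (sym5_cyclic k)) (prime_adj (sym5_cyclic k))"
proof -
  have "edges {2, 3, 5} (prime_adj (sym5_cyclic k)) = {{2, 3}, {2, 5}}"
    unfolding edges_def prime_adj_sym5_cyclic[OF assms] by auto
  then show ?thesis
    by (simp add: is_path3_def group_primes_sym5_cyclic doubleton_eq_iff)
qed

lemma is_triangle_sym5_cyclic: "is_triangle (group_primes (sym5_cyclic k)) (cod_adj (sym5_cyclic k))"
  using cod_adj_sym5_cyclic by (simp add: is_triangle_def group_primes_sym5_cyclic)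

theorem mainTheorem8:
  shows "\<forall>N::nat. \<exists>G :: nat monoid. group G \<and> finite (carrier G) \<and> card (carrier G) > N \<and>
           is_path3 (group_primes G) (prime_adj G) \<and>
           is_triangle (group_primes G) (cod_adj G)"
proof
  fix N :: nat
  let ?H = "sym5_cyclic (Suc N)"
  obtain G :: "nat monoid" where G: "group G" "G \<cong> ?H"
    using countable_group_iso_nat_monoid[OF group_sym5_cyclic
        countable_finite[OF finite_sym5_cyclic]] .
  have "card (carrier G) = 240 * 2 ^ N"
    by (simp add: iso_same_card[OF G(2)] card_sym5_cyclic)
  then have "N < card (carrier G)" using less_exp[of N] by linarith
  moreover have "finite (carrier G)" using iso_finite[OF G(2)] finite_sym5_cyclic by blast
  moreover note iso_group_primes[OF G(2)]
    iso_prime_adj[OF G(1) group_sym5_cyclic G(2)] iso_cod_adj[OF G(1) group_sym5_cyclic G(2)]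
  ultimately show "\<exists>G :: nat monoid. group G \<and> finite (carrier G) \<and> card (carrier G) > N \<and>
           is_path3 (group_primes G) (prime_adj G) \<and> is_triangle (group_primes G) (cod_adj G)"
    using G(1) is_path3_sym5_cyclic[of "Suc N"] is_triangle_sym5_cyclic[of "Suc N"] by auto
qed

end
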